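(* For every dimension $d\ge 2$ and every acceleration parameter $z\in[0,1)$, the qudit Unruh channel is a Hadamard channel, i.e. its complementary channel is entanglement-breaking.
   Context: Let $N(m)=\{\vec n\in\mathbb{Z}_{\ge0}^d:\sum_i n_i=m\}$ and $|(n_1,\dots,n_d)\rangle$ the $d$-mode Fock state. Write $z=\tanh^2 r$. The qudit Unruh channel $\mathcal{N}$ takes input states on the $d$-dimensional single-excitation space spanned by $|\vec e_i\rangle=|(0,\dots,0,1_i,0,\dots,0)\rangle$ and is given by $\mathcal{N}(\rho)=\mathrm{Tr}_E(V\rho V^\dagger)$ for the isometry $$V|\vec e_i\rangle=\frac{1}{\cosh^{d+1}r}\sum_{k=1}^\infty\tanh^{k-1}r\sum_{\vec n\in N(k-1)}\sqrt{1+n_i}\;|(n_1,\dots,1+n_i,\dots,n_d)\rangle_B\otimes|(n_1,\dots,n_d)\rangle_E$$ (this is the restriction of the two-mode-squeezing unitary $\bigotimes_i\exp[r(a_i^\dagger e_i^\dagger-a_ie_i)]$ with environment in vacuum). Its complementary channel is $\mathcal{N}^c(\rho)=\mathrm{Tr}_B(V\rho V^\dagger)$. A channel $\mathcal{M}$ is entanglement-breaking if $(\mathrm{id}\otimes\mathcal{M})(\Phi)$ is separable for the maximally entangled state $\Phi$ (equivalently, for all inputs); a channel is Hadamard if its complementary channel is entanglement-breaking. *)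

theory Defs
  imports "HOL-Analysis.Analysis"
begin

text \<open>Operators are represented by their matrix elements with respect to an orthonormal
  basis indexed by a (countable) type: an operator on l2('b) is a function
  'b => 'b => complex, M i j = <i|M|j>.\<close>

type_synonym 'b op = "'b \<Rightarrow> 'b \<Rightarrow> complex"

text \<open>Density operator: Hermitian, positive semidefinite, trace one (positivity plus a
  summable diagonal makes it trace class).\<close>
definition density_op :: "'b op \<Rightarrow> bool" where
  "density_op M \<longleftrightarrow>
     (\<forall>i j. M j i = cnj (M i j)) \<and>
     (\<forall>x :: 'b \<Rightarrow> complex. finite {i. x i \<noteq> 0} \<longrightarrow>
        0 \<le> Re (\<Sum>i\<in>{i. x i \<noteq> 0}. \<Sum>j\<in>{i. x i \<noteq> 0}. cnj (x i) * M i j * x j)) \<and>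
     ((\<lambda>i. Re (M i i)) has_sum 1) UNIV"

definition product_state :: "('a \<times> 'e) op \<Rightarrow> bool" where
  "product_state P \<longleftrightarrow>
     (\<exists>A B. density_op (A :: 'a op) \<and> density_op (B :: 'e op) \<and>
        P = (\<lambda>(a, e) (a', e'). A a a' * B e e'))"

definition conv_product_states :: "('a \<times> 'e) op set" where
  "conv_product_states =
     {S. \<exists>(k::nat) (p :: nat \<Rightarrow> real) P.
          (\<forall>j<k. 0 \<le> p j \<and> product_state (P j)) \<and> (\<Sum>j<k. p j) = 1 \<and>
          S = (\<lambda>x y. \<Sum>j<k. complex_of_real (p j) * P j x y)}"

definition separable :: "('a \<times> 'e) op \<Rightarrow> bool" where
  "separable \<sigma> \<longleftrightarrow>
     (\<exists>S :: nat \<Rightarrow> ('a \<times> 'e) op. (\<forall>n. S n \<in> conv_product_states) \<and>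
        (\<forall>x y. (\<lambda>n. S n x y) \<longlonglongrightarrow> \<sigma> x y))"

text \<open>Choi state (id (x) M)(Phi) for the maximally entangled state
  Phi = (1/d) sum_{a,a'} |aa><a'a'| on a finite-dimensional input.\<close>
definition choi :: "('a::finite op \<Rightarrow> 'e op) \<Rightarrow> ('a \<times> 'e) op" where
  "choi M = (\<lambda>(a, e) (a', e'). (1 / of_nat CARD('a)) *
              M (\<lambda>i j. if i = a \<and> j = a' then 1 else 0) e e')"

definition entanglement_breaking :: "('a::finite op \<Rightarrow> 'e op) \<Rightarrow> bool" where
  "entanglement_breaking M \<longleftrightarrow> separable (choi M)"

text \<open>An isometry V from l2('a) into l2('b x 'e) is given by its amplitudes
  V i b e = <b|<e| V |i>.  Complementary channel: N^c(rho) = Tr_B (V rho V^dagger).\<close>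
definition compl_channel ::
  "('a::finite \<Rightarrow> 'b \<Rightarrow> 'e \<Rightarrow> complex) \<Rightarrow> 'a op \<Rightarrow> 'e op" where
  "compl_channel V \<rho> = (\<lambda>e e'. infsum (\<lambda>b. \<Sum>i\<in>UNIV. \<Sum>j\<in>UNIV.
       \<rho> i j * V i b e * cnj (V j b e')) UNIV)"

definition hadamard_channel :: "('a::finite \<Rightarrow> 'b \<Rightarrow> 'e \<Rightarrow> complex) \<Rightarrow> bool" where
  "hadamard_channel V \<longleftrightarrow> entanglement_breaking (compl_channel V)"

text \<open>Fock states of d = CARD('d) modes: occupation numbers n :: 'd => nat.
  unit_exc i is the single-excitation state |e_i>.\<close>
definition unit_exc :: "'d::finite \<Rightarrow> ('d \<Rightarrow> nat)" where
  "unit_exc i = (\<lambda>j. if j = i then 1 else 0)"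

text \<open>Amplitudes of the qudit Unruh isometry:
  V|e_i> = cosh(r)^-(d+1) sum_{k>=1} tanh(r)^(k-1) sum_{n in N(k-1)} sqrt(1+n_i) |n+e_i>_B |n>_E.\<close>
definition unruh_iso :: "real \<Rightarrow> 'd::finite \<Rightarrow> ('d \<Rightarrow> nat) \<Rightarrow> ('d \<Rightarrow> nat) \<Rightarrow> complex" where
  "unruh_iso r i b n =
     (if b = (\<lambda>j. n j + unit_exc i j) then
        complex_of_real (1 / cosh r ^ (CARD('d) + 1) * tanh r ^ (\<Sum>j\<in>UNIV. n j)
                         * sqrt (1 + real (n i)))
      else 0)"

end

theory Submission
  imports Defs "HOL-Real_Asymp.Real_Asymp"
begin

text \<open>
  The Choi state of the complementary channel is block diagonal in the number L of environment
  excitations: its entry at ((a, e), (a', e')) is proportional to z^L sqrt(1 + e_a) sqrt(1 + e'_a')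
  if e + u_a = e' + u_a' and vanishes otherwise. Each block is a limit of mixtures of product states
  |alpha><alpha| (x) |beta><beta| with alpha_a = sqrt(rho_a) exp(i theta_a) and
  beta_e = sqrt(L!/e!) prod_i (sqrt(rho_i) exp(i theta_i))^e_i, the L-th symmetric power of alpha.
  Averaging the phases theta over roots of unity kills the entries with e + u_a ~= e' + u_a'.
  Averaging the radii independently over a distribution for which rho/n has moments tending to k!
  turns rho^(e + u_a) into (e + u_a)! = e! (1 + e_a) up to a common scale factor, which produces
  exactly the square roots above. The radii are rho = l + 1 for l <= n^2 + n, weighted by
  (n^2 + n - l) choose n, so that rho/n is a discretised exponential variable whose moments are
  controlled by Chu-Vandermonde sums. Mixing the blocks with the probabilities of the levels L gives
  finite convex combinations of product states that converge entrywise to the Choi state.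
\<close>

section \<open>Moments of a discretised exponential distribution\<close>

lemma sum_choose_diff_mult_choose:
  "(\<Sum>l\<le>M. ((M - l) choose n) * (l choose k)) = Suc M choose (n + k + 1)"
proof (induction M arbitrary: k)
  case 0
  then show ?case by (cases n; cases k) auto
next
  case (Suc M)
  have split: "(\<Sum>l\<le>Suc M. ((Suc M - l) choose n) * (l choose k))
      = (Suc M choose n) * (0 choose k) + (\<Sum>l\<le>M. ((M - l) choose n) * (Suc l choose k))"
    by (subst sum.atMost_Suc_shift) simp
  show ?case
  proof (cases k)
    case 0
    then show ?thesis using split Suc.IH[of 0] by simp
  next
    case (Suc k')
    have "(\<Sum>l\<le>M. ((M - l) choose n) * (Suc l choose k))
       = (\<Sum>l\<le>M. ((M - l) choose n) * (l choose k)) + (\<Sum>l\<le>M. ((M - l) choose n) * (l choose k'))"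
      using Suc by (simp add: sum.distrib algebra_simps)
    also have "\<dots> = Suc (Suc M) choose (n + k + 1)"
      using Suc Suc.IH by simp
    finally show ?thesis using split Suc by simp
  qed
qed

lemma sum_choose_diff_mult_choose_shift:
  "(\<Sum>l\<le>M. ((M - l) choose n) * ((l + k) choose k)) = (M + k + 1) choose (n + k + 1)"
proof -
  have "(M + k + 1) choose (n + k + 1) = (\<Sum>l\<in>{0..M + k}. ((M + k - l) choose n) * (l choose k))"
    using sum_choose_diff_mult_choose[of "M + k" n k] by (simp add: atMost_atLeast0)
  also have "\<dots> = (\<Sum>l\<in>{k..M + k}. ((M + k - l) choose n) * (l choose k))"
    by (rule sum.mono_neutral_right) auto
  also have "\<dots> = (\<Sum>l\<in>{0..M}. ((M - l) choose n) * ((l + k) choose k))"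
    using sum.shift_bounds_cl_nat_ivl[of "\<lambda>l. ((M + k - l) choose n) * (l choose k)" 0 k M] by simp
  finally show ?thesis by (simp add: atMost_atLeast0)
qed

lemma Suc_pow_le_fact_mult_choose: "Suc l ^ k \<le> fact k * ((l + k) choose k)"
proof (induction k)
  case 0
  then show ?case by simp
next
  case (Suc k)
  have "fact (Suc k) * ((l + Suc k) choose Suc k) = fact k * (Suc k * (Suc (l + k) choose Suc k))"
    by (simp add: algebra_simps del: binomial_Suc_Suc)
  also have "\<dots> = Suc (l + k) * (fact k * ((l + k) choose k))"
    by (simp only: Suc_times_binomial mult.left_commute)
  also have "\<dots> \<ge> Suc l * Suc l ^ k"
    by (intro mult_mono Suc.IH) auto
  finally show ?case by simp
qed

definition binom_moment :: "nat \<Rightarrow> nat \<Rightarrow> nat \<Rightarrow> real" where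
  "binom_moment M n k = (\<Sum>l\<le>M. real ((M - l) choose n) * real (Suc l) ^ k)"

lemma binom_moment_lower: "fact k * real (Suc M choose (n + k + 1)) \<le> binom_moment M n k"
proof -
  have "fact k * real (Suc M choose (n + k + 1))
      = (\<Sum>l\<le>M. real ((M - l) choose n) * (fact k * real (l choose k)))"
    by (simp only: sum_choose_diff_mult_choose[symmetric] of_nat_sum of_nat_mult
        sum_distrib_left mult.left_commute)
  also have "\<dots> \<le> binom_moment M n k"
    unfolding binom_moment_def
  proof (intro sum_mono mult_left_mono)
    fix l
    have "(l choose k) * fact k \<le> Suc l ^ k"
      using binomial_fact_pow[of l k] power_mono[of l "Suc l" k] by linarith
    then show "fact k * real (l choose k) \<le> real (Suc l) ^ k"
      by (metis mult.commute of_nat_fact of_nat_le_iff of_nat_mult of_nat_power)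
  qed simp
  finally show ?thesis .
qed

lemma binom_moment_upper: "binom_moment M n k \<le> fact k * real ((M + k + 1) choose (n + k + 1))"
proof -
  have "binom_moment M n k \<le> (\<Sum>l\<le>M. real ((M - l) choose n) * (fact k * real ((l + k) choose k)))"
    unfolding binom_moment_def
  proof (intro sum_mono mult_left_mono)
    fix l
    show "real (Suc l) ^ k \<le> fact k * real ((l + k) choose k)"
      using Suc_pow_le_fact_mult_choose[of l k]
      by (metis of_nat_fact of_nat_le_iff of_nat_mult of_nat_power)
  qed simp
  also have "\<dots> = fact k * real ((M + k + 1) choose (n + k + 1))"
    by (simp only: sum_choose_diff_mult_choose_shift[symmetric] of_nat_sum of_nat_mult
        sum_distrib_left mult.left_commute)
  finally show ?thesis .
qed

lemma tendsto_one_by_ratios: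
  fixes f :: "nat \<Rightarrow> nat \<Rightarrow> real"
  assumes "\<And>n. f n 0 = 1"
    and "\<And>k. \<forall>\<^sub>F n in sequentially. f n (Suc k) = f n k * g k n"
    and "\<And>k. g k \<longlonglongrightarrow> 1"
  shows "(\<lambda>n. f n k) \<longlonglongrightarrow> 1"
proof (induction k)
  case 0
  then show ?case by (simp add: assms(1))
next
  case (Suc k)
  have "(\<lambda>n. f n k * g k n) \<longlonglongrightarrow> 1 * 1"
    by (intro tendsto_mult Suc.IH assms(3))
  then show ?case
    using assms(2)[of k] by (simp add: eventually_mono Lim_transform_eventually)
qed

definition grid_max :: "nat \<Rightarrow> nat" where
  "grid_max n = n * n + n"

definition grid_mass :: "nat \<Rightarrow> real" where
  "grid_mass n = real (Suc (grid_max n) choose Suc n)"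

lemma grid_mass_pos: "grid_mass n > 0"
  unfolding grid_mass_def grid_max_def by (simp del: binomial_Suc_Suc)

lemma of_nat_choose_Suc_mult_Suc:
  assumes "k < m"
  shows "real (m choose Suc k) * real (Suc k) = real (m choose k) * real (m - k)"
proof -
  obtain m' where m: "m = Suc m'" using assms by (cases m) auto
  have "(m - k) * (m choose k) = m * ((m - 1) choose k)" by (rule binomial_absorb_comp)
  moreover have "Suc m' * (m' choose k) = (Suc m' choose Suc k) * Suc k" by (rule Suc_times_binomial_eq)
  ultimately have "(m choose Suc k) * Suc k = (m choose k) * (m - k)"
    using m by (simp add: mult.commute)
  then show ?thesis by (metis of_nat_mult)
qed

lemma divide_eq_divide_mult_ratio:
  fixes x y c d g p q :: real
  assumes "y * c = x * d" "c \<noteq> 0" "q \<noteq> 0"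
  shows "y / (g * (q * p)) = x / (g * p) * (d / (c * q))"
proof -
  have "x / (g * p) * (d / (c * q)) = (y * c) / ((g * (q * p)) * c)"
    using assms(1) by (simp add: ac_simps)
  then show ?thesis
    using assms(2) by simp
qed

lemma lower_choose_ratio_tendsto:
  "(\<lambda>n. real (Suc (grid_max n) choose (n + k + 1)) / (grid_mass n * real n ^ k)) \<longlonglongrightarrow> 1"
proof (rule tendsto_one_by_ratios[where g = "\<lambda>k n. (real (n * n) - k) / ((real n + k + 2) * real n)"])
  show "real (Suc (grid_max n) choose (n + 0 + 1)) / (grid_mass n * real n ^ 0) = 1" for n
    using grid_mass_pos[of n] by (simp add: grid_mass_def del: binomial_Suc_Suc)
  show "(\<lambda>n. (real (n * n) - k) / ((real n + k + 2) * real n)) \<longlonglongrightarrow> 1" for k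
    by real_asymp
  fix k
  show "\<forall>\<^sub>F n in sequentially. real (Suc (grid_max n) choose (n + Suc k + 1)) / (grid_mass n * real n ^ Suc k)
    = real (Suc (grid_max n) choose (n + k + 1)) / (grid_mass n * real n ^ k)
      * ((real (n * n) - k) / ((real n + k + 2) * real n))"
    using eventually_ge_at_top[of "k + 1"]
  proof eventually_elim
    case (elim n)
    then have "k < n * n" by (metis Suc_eq_plus1 Suc_le_lessD le_square order_less_le_trans)
    then have "real (Suc (grid_max n) choose (n + Suc k + 1)) * (real n + k + 2)
        = real (Suc (grid_max n) choose (n + k + 1)) * (real (n * n) - k)"
      using of_nat_choose_Suc_mult_Suc[of "n + k + 1" "Suc (grid_max n)"]
      by (simp add: grid_max_def of_nat_diff algebra_simps)
    then show ?case
      unfolding power_Suc using elim by (intro divide_eq_divide_mult_ratio) auto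
  qed
qed

lemma upper_choose_ratio_tendsto:
  "(\<lambda>n. real ((grid_max n + k + 1) choose (n + k + 1)) / (grid_mass n * real n ^ k)) \<longlonglongrightarrow> 1"
proof (rule tendsto_one_by_ratios[where g = "\<lambda>k n. (real (n * n) + n + k + 2) / ((real n + k + 2) * real n)"])
  show "real ((grid_max n + 0 + 1) choose (n + 0 + 1)) / (grid_mass n * real n ^ 0) = 1" for n
    using grid_mass_pos[of n] by (simp add: grid_mass_def del: binomial_Suc_Suc)
  show "(\<lambda>n. (real (n * n) + n + k + 2) / ((real n + k + 2) * real n)) \<longlonglongrightarrow> 1" for k
    by real_asymp
  fix k
  show "\<forall>\<^sub>F n in sequentially. real ((grid_max n + Suc k + 1) choose (n + Suc k + 1)) / (grid_mass n * real n ^ Suc k)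
    = real ((grid_max n + k + 1) choose (n + k + 1)) / (grid_mass n * real n ^ k)
      * ((real (n * n) + n + k + 2) / ((real n + k + 2) * real n))"
    using eventually_ge_at_top[of 1]
  proof eventually_elim
    case (elim n)
    have "real (Suc (n + k + 1)) * real (Suc (grid_max n + k + 1) choose Suc (n + k + 1))
        = real (Suc (grid_max n + k + 1)) * real ((grid_max n + k + 1) choose (n + k + 1))"
      by (metis Suc_times_binomial of_nat_mult)
    then have "real ((grid_max n + Suc k + 1) choose (n + Suc k + 1)) * (real n + k + 2)
        = real ((grid_max n + k + 1) choose (n + k + 1)) * (real (n * n) + n + k + 2)"
      by (simp add: grid_max_def algebra_simps)
    then show ?case
      unfolding power_Suc using elim by (intro divide_eq_divide_mult_ratio) auto
  qed
qed

definition scaled_moment :: "nat \<Rightarrow> nat \<Rightarrow> real" where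
  "scaled_moment n k = binom_moment (grid_max n) n k / (grid_mass n * real n ^ k)"

lemma scaled_moment_tendsto: "(\<lambda>n. scaled_moment n k) \<longlonglongrightarrow> fact k"
proof (rule tendsto_sandwich)
  have scale_pos: "\<forall>\<^sub>F n in sequentially. grid_mass n * real n ^ k > 0"
    using eventually_ge_at_top[of 1] by eventually_elim (simp add: grid_mass_pos)
  show "\<forall>\<^sub>F n in sequentially.
      fact k * (real (Suc (grid_max n) choose (n + k + 1)) / (grid_mass n * real n ^ k)) \<le> scaled_moment n k"
    using scale_pos unfolding scaled_moment_def times_divide_eq_right
    by eventually_elim (rule divide_right_mono[OF binom_moment_lower], simp)
  show "\<forall>\<^sub>F n in sequentially.
      scaled_moment n k \<le> fact k * (real ((grid_max n + k + 1) choose (n + k + 1)) / (grid_mass n * real n ^ k))"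
    using scale_pos unfolding scaled_moment_def times_divide_eq_right
    by eventually_elim (rule divide_right_mono[OF binom_moment_upper], simp)
  show "(\<lambda>n. fact k * (real (Suc (grid_max n) choose (n + k + 1)) / (grid_mass n * real n ^ k)))
      \<longlonglongrightarrow> fact k"
    using tendsto_mult[OF tendsto_const lower_choose_ratio_tendsto, of "fact k" k] by simp
  show "(\<lambda>n. fact k * (real ((grid_max n + k + 1) choose (n + k + 1)) / (grid_mass n * real n ^ k)))
      \<longlonglongrightarrow> fact k"
    using tendsto_mult[OF tendsto_const upper_choose_ratio_tendsto, of "fact k" k] by simp
qed

definition excitations :: "('d::finite \<Rightarrow> nat) \<Rightarrow> nat" where
  "excitations e = (\<Sum>i\<in>UNIV. e i)"

definition add_exc :: "('d::finite \<Rightarrow> nat) \<Rightarrow> 'd \<Rightarrow> 'd \<Rightarrow> nat" where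
  "add_exc e a = (\<lambda>j. e j + unit_exc a j)"

definition level :: "nat \<Rightarrow> ('d::finite \<Rightarrow> nat) set" where
  "level L = {e. excitations e = L}"

definition mfact :: "('d::finite \<Rightarrow> nat) \<Rightarrow> real" where
  "mfact e = (\<Prod>i\<in>UNIV. fact (e i))"

lemma excitations_add_exc [simp]: "excitations (add_exc e a) = Suc (excitations e)"
  unfolding excitations_def add_exc_def unit_exc_def by (simp add: sum.distrib)

lemma excitations_eq_if_add_exc_eq: "add_exc e a = add_exc e' a' \<Longrightarrow> excitations e = excitations e'"
  by (metis excitations_add_exc nat.inject)

lemma le_excitations: "e i \<le> excitations e"
  unfolding excitations_def by (rule member_le_sum) auto

lemma finite_level: "finite (level L :: ('d::finite \<Rightarrow> nat) set)"
proof (rule finite_subset)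
  show "level L \<subseteq> PiE (UNIV :: 'd set) (\<lambda>_. {..L})"
    unfolding level_def using le_excitations by (auto simp: PiE_UNIV_domain)
qed (simp add: finite_PiE)

lemma level_nonempty: "level L \<noteq> ({} :: ('d::finite \<Rightarrow> nat) set)"
proof -
  have "(\<lambda>i. if i = undefined then L else 0) \<in> (level L :: ('d \<Rightarrow> nat) set)"
    unfolding level_def excitations_def by simp
  then show ?thesis by blast
qed

lemma mfact_pos: "mfact e > 0"
  unfolding mfact_def by (intro prod_pos) auto

lemma mfact_add_exc: "mfact (add_exc e a) = mfact e * real (Suc (e a))"
proof -
  have "mfact (add_exc e a) = (\<Prod>i\<in>UNIV. fact (e i) * (if i = a then real (Suc (e i)) else 1))"
    unfolding mfact_def add_exc_def unit_exc_def by (intro prod.cong) auto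
  then show ?thesis
    unfolding prod.distrib mfact_def by simp
qed

section \<open>The Choi state of the complementary channel\<close>

definition unruh_choi :: "real \<Rightarrow> 'd::finite \<Rightarrow> ('d \<Rightarrow> nat) \<Rightarrow> 'd \<Rightarrow> ('d \<Rightarrow> nat) \<Rightarrow> real" where
  "unruh_choi z a e a' e' =
     (if add_exc e a = add_exc e' a' then
        1 / real CARD('d) * (1 - z) ^ (CARD('d) + 1) * z ^ excitations e
          * sqrt (1 + real (e a)) * sqrt (1 + real (e' a'))
      else 0)"

lemma compl_channel_matrix_unit:
  "compl_channel V (\<lambda>i j. if i = a \<and> j = a' then 1 else 0) e e' = (\<Sum>\<^sub>\<infinity>b. V a b e * cnj (V a' b e'))"
proof -
  have "(\<Sum>j\<in>UNIV. (if i = a \<and> j = a' then 1 else 0) * V i b e * cnj (V j b e'))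
      = (if i = a then V i b e * cnj (V a' b e') else 0)" for i b
  proof -
    have "(\<Sum>j\<in>UNIV. (if i = a \<and> j = a' then 1 else 0) * V i b e * cnj (V j b e'))
        = (\<Sum>j\<in>UNIV. if j = a' then (if i = a then V i b e * cnj (V j b e') else 0) else 0)"
      by (intro sum.cong) simp_all
    also have "\<dots> = (if i = a then V i b e * cnj (V a' b e') else 0)"
      by simp
    finally show ?thesis .
  qed
  then show ?thesis
    unfolding compl_channel_def by simp
qed

lemma sech_pow_sq: "(1 / cosh r ^ k)\<^sup>2 = (1 - (tanh r)\<^sup>2) ^ k" for r :: real
proof -
  have "cosh r \<noteq> 0"
    using cosh_real_pos[of r] by simp
  then have "1 - (tanh r)\<^sup>2 = ((cosh r)\<^sup>2 - (sinh r)\<^sup>2) / (cosh r)\<^sup>2"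
    unfolding tanh_def by (simp add: field_simps power_divide)
  then have "1 - (tanh r)\<^sup>2 = 1 / (cosh r)\<^sup>2"
    by (simp add: hyperbolic_pythagoras)
  then show ?thesis
    by (simp add: power_divide power_mult[symmetric] mult.commute)
qed

lemma choi_compl_unruh_iso:
  "choi (compl_channel (unruh_iso r :: 'd::finite \<Rightarrow> ('d \<Rightarrow> nat) \<Rightarrow> ('d \<Rightarrow> nat) \<Rightarrow> complex)) (a, e) (a', e')
     = complex_of_real (unruh_choi ((tanh r)\<^sup>2) a e a' e')"
proof -
  define V where "V = (unruh_iso r :: 'd \<Rightarrow> ('d \<Rightarrow> nat) \<Rightarrow> ('d \<Rightarrow> nat) \<Rightarrow> complex)"
  define c where "c = 1 / cosh r ^ (CARD('d) + 1)"
  have "V a b e = 0" if "b \<noteq> add_exc e a" for b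
    using that unfolding V_def unruh_iso_def add_exc_def by auto
  then have "(\<Sum>\<^sub>\<infinity>b. V a b e * cnj (V a' b e')) = (\<Sum>\<^sub>\<infinity>b\<in>{add_exc e a}. V a b e * cnj (V a' b e'))"
    by (intro infsum_cong_neutral) auto
  also have "\<dots> = V a (add_exc e a) e * cnj (V a' (add_exc e a) e')"
    by simp
  also have "\<dots> = (if add_exc e a = add_exc e' a' then complex_of_real (c\<^sup>2
      * tanh r ^ (excitations e + excitations e') * sqrt (1 + real (e a)) * sqrt (1 + real (e' a')))
      else 0)"
  proof -
    have "V a (add_exc e a) e = complex_of_real (c * tanh r ^ excitations e * sqrt (1 + real (e a)))"
      unfolding V_def unruh_iso_def c_def excitations_def by (simp add: add_exc_def)
    moreover have "V a' (add_exc e a) e' = (if add_exc e a = add_exc e' a' then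
        complex_of_real (c * tanh r ^ excitations e' * sqrt (1 + real (e' a'))) else 0)"
      unfolding V_def unruh_iso_def c_def excitations_def by (auto simp: add_exc_def)
    ultimately show ?thesis
      by (simp add: power_add power2_eq_square)
  qed
  also have "\<dots> = of_nat CARD('d) * complex_of_real (unruh_choi ((tanh r)\<^sup>2) a e a' e')"
  proof (cases "add_exc e a = add_exc e' a'")
    case True
    then have "excitations e' = excitations e"
      by (metis excitations_eq_if_add_exc_eq)
    then have "tanh r ^ (excitations e + excitations e') = ((tanh r)\<^sup>2) ^ excitations e"
      by (simp add: power_mult[symmetric] mult_2)
    then show ?thesis
      using True unfolding unruh_choi_def c_def sech_pow_sq by simp
  qed (simp add: unruh_choi_def)
  finally show ?thesis
    unfolding choi_def compl_channel_matrix_unit V_def by simp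
qed

section \<open>Distribution of the environment excitation number\<close>

definition level_weight :: "'d::finite itself \<Rightarrow> nat \<Rightarrow> real" where
  "level_weight _ L = (\<Sum>e\<in>(level L :: ('d \<Rightarrow> nat) set). \<Sum>i\<in>UNIV. real (Suc (e i)))"

text \<open>The trace of the block of the Choi state in which the environment carries \<open>L\<close> excitations.\<close>
definition level_prob :: "'d::finite itself \<Rightarrow> real \<Rightarrow> nat \<Rightarrow> real" where
  "level_prob T z L = 1 / real CARD('d) * (1 - z) ^ (CARD('d) + 1) * z ^ L * level_weight T L"

lemma level_weight_pos: "level_weight TYPE('d::finite) L > 0"
  unfolding level_weight_def by (intro sum_pos finite_level level_nonempty) auto

lemma level_prob_nonneg: "0 \<le> z \<Longrightarrow> z < 1 \<Longrightarrow> level_prob TYPE('d::finite) z L \<ge> 0"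
  unfolding level_prob_def using level_weight_pos[where 'd = 'd, of L] by (intro mult_nonneg_nonneg) auto

lemma has_sum_finite_sum:
  fixes f :: "'i \<Rightarrow> 'a \<Rightarrow> 'b::topological_comm_monoid_add"
  assumes "finite I" "\<And>i. i \<in> I \<Longrightarrow> (f i has_sum s i) A"
  shows "((\<lambda>x. \<Sum>i\<in>I. f i x) has_sum (\<Sum>i\<in>I. s i)) A"
  using assms by (induction I rule: finite_induct) (simp_all add: has_sum_add)

lemma has_sum_prod_PiE_nonneg:
  fixes g :: "'i \<Rightarrow> 'a \<Rightarrow> real"
  assumes "finite I" and "\<And>i x. g i x \<ge> 0"
    and "\<And>i. i \<in> I \<Longrightarrow> (g i has_sum s i) (B i)" and "\<And>i. i \<in> I \<Longrightarrow> s i \<noteq> 0"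
  shows "((\<lambda>f. \<Prod>i\<in>I. g i (f i)) has_sum (\<Prod>i\<in>I. s i)) (PiE I B)"
proof -
  have "infsum (\<lambda>f. \<Prod>i\<in>I. g i (f i)) (PiE I B) = (\<Prod>i\<in>I. infsum (g i) (B i))"
    using assms(1-3) by (intro infsum_prod_PiE_abs) (auto dest: has_sum_imp_summable)
  also have "\<dots> = (\<Prod>i\<in>I. s i)"
    using assms(3) by (intro prod.cong) (auto intro: infsumI)
  finally have sum: "infsum (\<lambda>f. \<Prod>i\<in>I. g i (f i)) (PiE I B) = (\<Prod>i\<in>I. s i)" .
  \<comment> \<open>a non-summable family has \<open>infsum\<close> zero, which the product of the \<open>s i\<close> is not\<close>
  moreover have "(\<Prod>i\<in>I. s i) \<noteq> 0"
    using assms(1,4) by simp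
  ultimately show ?thesis
    by (metis has_sum_infsum infsum_not_exists)
qed

lemma has_sum_weighted_excitations:
  fixes z :: real
  assumes "0 \<le> z" "z < 1"
  shows "((\<lambda>e::'d::finite \<Rightarrow> nat. z ^ excitations e * (\<Sum>i\<in>UNIV. real (Suc (e i))))
           has_sum (real CARD('d) / (1 - z) ^ (CARD('d) + 1))) UNIV"
proof -
  define g where "g = (\<lambda>(i :: 'd) i' k. z ^ k * (if i' = i then real (Suc k) else 1))"
  have geometric: "((\<lambda>k. z ^ k) has_sum (1 / (1 - z))) UNIV"
    using assms geometric_sums[of z] by (intro sums_nonneg_imp_has_sum) auto
  have geometric_deriv: "((\<lambda>k. real (Suc k) * z ^ k) has_sum (1 / (1 - z) ^ 2)) UNIV"
    using assms geometric_deriv_sums[of z] by (intro sums_nonneg_imp_has_sum) auto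
  have "(g i i' has_sum (if i' = i then 1 / (1 - z) ^ 2 else 1 / (1 - z))) UNIV" for i i'
  proof (cases "i' = i")
    case True
    then show ?thesis
      using geometric_deriv by (simp add: g_def mult.commute)
  qed (use geometric in \<open>simp add: g_def\<close>)
  then have factors: "((\<lambda>e. \<Prod>i'\<in>UNIV. g i i' (e i'))
      has_sum (\<Prod>i'\<in>UNIV. if i' = i then 1 / (1 - z) ^ 2 else 1 / (1 - z))) (PiE UNIV (\<lambda>_. UNIV))" for i
    using assms by (intro has_sum_prod_PiE_nonneg) (auto simp: g_def)
  have product: "(\<Prod>i'\<in>UNIV. if i' = i then 1 / (1 - z) ^ 2 else 1 / (1 - z)) = 1 / (1 - z) ^ (CARD('d) + 1)"
    for i :: 'd
  proof -
    have "(\<Prod>i'\<in>UNIV. if i' = i then 1 / (1 - z) ^ 2 else 1 / (1 - z))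
        = 1 / (1 - z) ^ 2 * (1 / (1 - z)) ^ (CARD('d) - 1)"
      by (subst prod.delta_remove) (simp_all add: card_Diff_singleton)
    also have "\<dots> = (1 / (1 - z)) ^ (2 + (CARD('d) - 1))"
      by (simp only: power_add power_one_over)
    also have "2 + (CARD('d) - 1) = CARD('d) + 1"
      using finite_UNIV_card_ge_0[where 'a = 'd] by simp
    finally show ?thesis
      by (simp add: power_divide)
  qed
  have "((\<lambda>e. \<Prod>i'\<in>UNIV. g i i' (e i')) has_sum 1 / (1 - z) ^ (CARD('d) + 1)) UNIV" for i
    using factors[of i] unfolding product PiE_UNIV .
  then have "((\<lambda>e. \<Sum>i\<in>UNIV. \<Prod>i'\<in>UNIV. g i i' (e i'))
      has_sum (\<Sum>i\<in>(UNIV :: 'd set). 1 / (1 - z) ^ (CARD('d) + 1))) UNIV"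
    by (intro has_sum_finite_sum) auto
  moreover have "(\<Sum>i\<in>UNIV. \<Prod>i'\<in>UNIV. g i i' (e i')) = z ^ excitations e * (\<Sum>i\<in>UNIV. real (Suc (e i)))"
    for e :: "'d \<Rightarrow> nat"
    by (simp add: g_def prod.distrib excitations_def power_sum sum_distrib_left prod.If_cases)
  ultimately show ?thesis
    by simp
qed

lemma level_prob_sums: "0 \<le> z \<Longrightarrow> z < 1 \<Longrightarrow> level_prob TYPE('d::finite) z sums 1"
proof -
  assume z: "0 \<le> z" "z < 1"
  define f where "f e = z ^ excitations e * (\<Sum>i\<in>UNIV. real (Suc (e i)))" for e :: "'d \<Rightarrow> nat"
  have "bij_betw (\<lambda>e. (excitations e, e)) UNIV (SIGMA L:UNIV. level L)"
    by (rule bij_betwI[where g = snd]) (auto simp: level_def)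
  then have "((\<lambda>(L, e). f e) has_sum (real CARD('d) / (1 - z) ^ (CARD('d) + 1))) (SIGMA L:UNIV. level L)"
    using has_sum_weighted_excitations[OF z, where 'd = 'd]
    by (subst has_sum_reindex_bij_betw[symmetric]) (auto simp: f_def)
  moreover have "((\<lambda>e. f e) has_sum z ^ L * level_weight TYPE('d) L) (level L)" for L
    using finite_level
    by (intro has_sum_finiteI) (auto simp: f_def level_weight_def level_def sum_distrib_left)
  ultimately have "((\<lambda>L. z ^ L * level_weight TYPE('d) L) has_sum (real CARD('d) / (1 - z) ^ (CARD('d) + 1))) UNIV"
    by (intro has_sum_Sigma'[where B = level]) auto
  then have "((\<lambda>L. 1 / real CARD('d) * (1 - z) ^ (CARD('d) + 1) * (z ^ L * level_weight TYPE('d) L))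
      has_sum (1 / real CARD('d) * (1 - z) ^ (CARD('d) + 1) * (real CARD('d) / (1 - z) ^ (CARD('d) + 1)))) UNIV"
    by (rule has_sum_cmult_right)
  moreover have "(\<lambda>L. 1 / real CARD('d) * (1 - z) ^ (CARD('d) + 1) * (z ^ L * level_weight TYPE('d) L))
      = level_prob TYPE('d) z"
    by (simp add: level_prob_def fun_eq_iff mult.assoc)
  moreover have "1 / real CARD('d) * (1 - z) ^ (CARD('d) + 1) * (real CARD('d) / (1 - z) ^ (CARD('d) + 1)) = 1"
    using z by simp
  ultimately show ?thesis
    by (intro has_sum_imp_sums) simp
qed

definition rank_one :: "('b \<Rightarrow> complex) \<Rightarrow> 'b op" where
  "rank_one v = (\<lambda>x y. v x * cnj (v y))"

lemma density_op_rank_one: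
  assumes "((\<lambda>x. (cmod (v x))\<^sup>2) has_sum 1) UNIV"
  shows "density_op (rank_one v)"
  unfolding density_op_def
proof (intro conjI allI impI)
  show "rank_one v j i = cnj (rank_one v i j)" for i j
    unfolding rank_one_def by simp
next
  fix x :: "'a \<Rightarrow> complex"
  define w where "w = (\<Sum>i\<in>{i. x i \<noteq> 0}. cnj (x i) * v i)"
  have "(\<Sum>i\<in>{i. x i \<noteq> 0}. \<Sum>j\<in>{i. x i \<noteq> 0}. cnj (x i) * rank_one v i j * x j) = w * cnj w"
    unfolding w_def rank_one_def cnj_sum sum_product by (simp add: mult_ac)
  also have "\<dots> = complex_of_real ((Re w)\<^sup>2 + (Im w)\<^sup>2)"
    by (rule complex_mult_cnj)
  finally show "0 \<le> Re (\<Sum>i\<in>{i. x i \<noteq> 0}. \<Sum>j\<in>{i. x i \<noteq> 0}. cnj (x i) * rank_one v i j * x j)"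
    by simp
next
  have "Re (rank_one v i i) = (cmod (v i))\<^sup>2" for i
    unfolding rank_one_def using cmod_power2[of "v i"] by (simp add: power2_eq_square)
  then show "((\<lambda>i. Re (rank_one v i i)) has_sum 1) UNIV"
    using assms by simp
qed

lemma sum_in_conv_product_states:
  fixes P :: "'k \<Rightarrow> ('a \<times> 'e) op"
  assumes "finite K" "\<And>k. k \<in> K \<Longrightarrow> 0 \<le> p k" "\<And>k. k \<in> K \<Longrightarrow> product_state (P k)"
    and "(\<Sum>k\<in>K. p k) = 1"
  shows "(\<lambda>u v. \<Sum>k\<in>K. complex_of_real (p k) * P k u v) \<in> conv_product_states"
proof -
  obtain h where h: "bij_betw h {..<card K} K"
    using ex_bij_betw_nat_finite[OF assms(1)] by (auto simp: atLeast0LessThan)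
  have reindex: "(\<Sum>k\<in>K. f k) = (\<Sum>j<card K. f (h j))" for f :: "'k \<Rightarrow> 'b::comm_monoid_add"
    using sum.reindex_bij_betw[OF h, of f] by simp
  have "h j \<in> K" if "j < card K" for j
    using bij_betwE[OF h] that by simp
  then show ?thesis
    unfolding conv_product_states_def
    using assms(2-4) reindex[of p] reindex[of "\<lambda>k. complex_of_real (p k) * P k _ _"]
    by (intro CollectI exI[of _ "card K"] exI[of _ "p \<circ> h"] exI[of _ "P \<circ> h"]) auto
qed

lemma rank_one_mixture_in_conv_product_states:
  fixes \<alpha> :: "'k \<Rightarrow> 'a \<Rightarrow> complex" and \<beta> :: "'k \<Rightarrow> 'e \<Rightarrow> complex"
  assumes "finite K" and "\<And>k. k \<in> K \<Longrightarrow> 0 \<le> c k"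
    and "\<And>k. k \<in> K \<Longrightarrow> ((\<lambda>a. (cmod (\<alpha> k a))\<^sup>2) has_sum A k) UNIV" and "\<And>k. k \<in> K \<Longrightarrow> A k > 0"
    and "\<And>k. k \<in> K \<Longrightarrow> ((\<lambda>e. (cmod (\<beta> k e))\<^sup>2) has_sum B k) UNIV" and "\<And>k. k \<in> K \<Longrightarrow> B k > 0"
    and "(\<Sum>k\<in>K. c k * A k * B k) = 1"
  shows "(\<lambda>(a, e) (a', e'). \<Sum>k\<in>K. complex_of_real (c k) * (\<alpha> k a * cnj (\<alpha> k a')) * (\<beta> k e * cnj (\<beta> k e')))
    \<in> conv_product_states"
proof -
  have density: "density_op (rank_one (\<lambda>x. v x / complex_of_real (sqrt N)))"
    if "((\<lambda>x. (cmod (v x))\<^sup>2) has_sum N) UNIV" "N > 0" for v :: "'b \<Rightarrow> complex" and N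
  proof (rule density_op_rank_one)
    show "((\<lambda>x. (cmod (v x / complex_of_real (sqrt N)))\<^sup>2) has_sum 1) UNIV"
      using has_sum_divide_const[OF that(1), of N] that(2) by (simp add: norm_divide power_divide)
  qed
  have rank_one_scaled: "rank_one (\<lambda>x. v x / complex_of_real (sqrt N)) x y = v x * cnj (v y) / complex_of_real N"
    if "N > 0" for v :: "'b \<Rightarrow> complex" and N x y
    using that by (simp add: rank_one_def field_simps flip: of_real_mult)
  define P where "P k = (\<lambda>(a, e) (a', e'). rank_one (\<lambda>x. \<alpha> k x / complex_of_real (sqrt (A k))) a a'
      * rank_one (\<lambda>x. \<beta> k x / complex_of_real (sqrt (B k))) e e')" for k
  have "(\<lambda>u v. \<Sum>k\<in>K. complex_of_real (c k * A k * B k) * P k u v) \<in> conv_product_states"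
  proof (rule sum_in_conv_product_states)
    show "product_state (P k)" if "k \<in> K" for k
      unfolding product_state_def P_def using that assms(3-6) by (blast intro: density)
    show "0 \<le> c k * A k * B k" if "k \<in> K" for k
      using that assms(2,4,6) by (meson less_imp_le mult_nonneg_nonneg)
  qed (use assms in auto)
  moreover have "complex_of_real (c k * A k * B k) * P k u v = complex_of_real (c k)
      * (\<alpha> k (fst u) * cnj (\<alpha> k (fst v))) * (\<beta> k (snd u) * cnj (\<beta> k (snd v)))"
    if "k \<in> K" for k u v
    using assms(4,6)[OF that] by (simp add: P_def rank_one_scaled case_prod_unfold field_simps)
  then have "(\<lambda>u v. \<Sum>k\<in>K. complex_of_real (c k * A k * B k) * P k u v) = (\<lambda>u v. \<Sum>k\<in>K. complex_of_real (c k)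
      * (\<alpha> k (fst u) * cnj (\<alpha> k (fst v))) * (\<beta> k (snd u) * cnj (\<beta> k (snd v))))"
    by (intro ext sum.cong) auto
  ultimately show ?thesis
    unfolding case_prod_unfold by (simp only:)
qed

section \<open>Averaging over phases\<close>

lemma sum_roots_of_unity:
  fixes k :: int
  assumes "N > 0" "\<bar>k\<bar> < int N"
  shows "(\<Sum>y<N. cis (2 * pi * real_of_int k * real y / real N)) = (if k = 0 then of_nat N else 0)"
proof (cases "k = 0")
  case False
  define w where "w = cis (2 * pi * real_of_int k / real N)"
  have "w \<noteq> 1"
  proof
    assume "w = 1"
    then have "cos (2 * pi * real_of_int k / real N) = 1"
      unfolding w_def by (metis cis.sel(1) one_complex.sel(1))
    then obtain i :: int where "2 * pi * real_of_int k / real N = real_of_int i * 2 * pi"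
      using cos_one_2pi_int by blast
    then have "k = i * int N"
      using assms(1) by (simp add: field_simps) (metis of_int_eq_iff of_int_mult of_int_of_nat_eq)
    with False assms(2) show False
      by (cases "i = 0") (auto simp: abs_mult dest: mult_right_mono[of 1 "\<bar>i\<bar>" "int N"])
  qed
  have "cis (2 * pi * real_of_int k * real y / real N) = w ^ y" for y
    unfolding w_def Complex.DeMoivre by (simp add: field_simps)
  moreover have "w ^ N = 1"
    unfolding w_def Complex.DeMoivre using assms(1) cis_multiple_2pi[of "real_of_int k"] by (simp add: field_simps)
  ultimately show ?thesis
    using False \<open>w \<noteq> 1\<close> by (simp add: geometric_sum)
qed simp

lemma cis_sum: "finite I \<Longrightarrow> cis (\<Sum>i\<in>I. f i) = (\<Prod>i\<in>I. cis (f i))"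
  by (induction I rule: finite_induct) (simp_all add: cis_mult[symmetric])

definition phase :: "nat \<Rightarrow> ('d::finite \<Rightarrow> nat) \<Rightarrow> ('d \<Rightarrow> nat) \<Rightarrow> real" where
  "phase N j e = (\<Sum>i\<in>UNIV. 2 * pi * real (e i) * real (j i) / real N)"

definition phases :: "nat \<Rightarrow> ('d::finite \<Rightarrow> nat) set" where
  "phases N = PiE UNIV (\<lambda>_. {..<N})"

lemma finite_phases: "finite (phases N)"
  unfolding phases_def by (simp add: finite_PiE)

lemma card_phases: "card (phases N :: ('d::finite \<Rightarrow> nat) set) = N ^ CARD('d)"
  unfolding phases_def by (simp add: card_PiE)

lemma sum_phases_cis:
  fixes m m' :: "'d::finite \<Rightarrow> nat"
  assumes "N > 0" "\<And>i. m i < N" "\<And>i. m' i < N"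
  shows "(\<Sum>j\<in>phases N. cis (phase N j m - phase N j m')) = (if m = m' then of_nat (N ^ CARD('d)) else 0)"
proof -
  define k where "k i = int (m i) - int (m' i)" for i
  have "cis (phase N j m - phase N j m') = (\<Prod>i\<in>UNIV. cis (2 * pi * real_of_int (k i) * real (j i) / real N))"
    for j
  proof -
    have "phase N j m - phase N j m' = (\<Sum>i\<in>UNIV. 2 * pi * real_of_int (k i) * real (j i) / real N)"
      unfolding phase_def k_def sum_subtractf[symmetric]
      by (intro sum.cong) (simp_all add: algebra_simps diff_divide_distrib)
    then show ?thesis
      by (simp add: cis_sum)
  qed
  then have "(\<Sum>j\<in>phases N. cis (phase N j m - phase N j m'))
      = (\<Prod>i\<in>UNIV. \<Sum>y<N. cis (2 * pi * real_of_int (k i) * real y / real N))"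
    unfolding phases_def by (simp add: prod_sum_PiE)
  also have "\<dots> = (\<Prod>i\<in>UNIV. if k i = 0 then of_nat N else 0)"
  proof (intro prod.cong refl sum_roots_of_unity assms(1))
    show "\<bar>k i\<bar> < int N" for i
      using assms(2,3)[of i] unfolding k_def by linarith
  qed
  also have "\<dots> = (if \<forall>i. k i = 0 then of_nat N ^ CARD('d) else 0)"
    by (auto intro: prod_zero)
  also have "(\<forall>i. k i = 0) \<longleftrightarrow> m = m'"
    unfolding k_def fun_eq_iff by auto
  finally show ?thesis
    by simp
qed

definition rho_pow :: "('d::finite \<Rightarrow> nat) \<Rightarrow> ('d \<Rightarrow> nat) \<Rightarrow> real" where
  "rho_pow l e = (\<Prod>i\<in>UNIV. real (Suc (l i)) ^ e i)"

definition coherent_amp :: "nat \<Rightarrow> ('d::finite \<Rightarrow> nat) \<Rightarrow> ('d \<Rightarrow> nat) \<Rightarrow> ('d \<Rightarrow> nat) \<Rightarrow> complex" where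
  "coherent_amp N l j e = complex_of_real (sqrt (rho_pow l e)) * cis (phase N j e)"

lemma rho_pow_pos: "rho_pow l e > 0"
  unfolding rho_pow_def by (intro prod_pos) auto

lemma rho_pow_add: "rho_pow l (\<lambda>i. e i + f i) = rho_pow l e * rho_pow l f"
  unfolding rho_pow_def by (simp add: power_add prod.distrib)

lemma phase_add: "phase N j (\<lambda>i. e i + f i) = phase N j e + phase N j f"
  unfolding phase_def by (simp add: sum.distrib[symmetric] algebra_simps add_divide_distrib)

lemma coherent_amp_add:
  "coherent_amp N l j (\<lambda>i. e i + f i) = coherent_amp N l j e * coherent_amp N l j f"
  unfolding coherent_amp_def rho_pow_add phase_add
  by (simp add: real_sqrt_mult cis_mult[symmetric] mult_ac)

lemma cmod_coherent_amp_sq: "(cmod (coherent_amp N l j e))\<^sup>2 = rho_pow l e"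
  unfolding coherent_amp_def using rho_pow_pos[of l e] by (simp add: norm_mult)

lemma sum_phases_coherent_amp:
  fixes m m' :: "'d::finite \<Rightarrow> nat"
  assumes "N > 0" "\<And>i. m i < N" "\<And>i. m' i < N"
  shows "(\<Sum>j\<in>phases N. coherent_amp N l j m * cnj (coherent_amp N l j m'))
    = (if m = m' then of_nat (N ^ CARD('d)) * complex_of_real (rho_pow l m) else 0)"
proof -
  have "coherent_amp N l j m * cnj (coherent_amp N l j m')
      = complex_of_real (sqrt (rho_pow l m) * sqrt (rho_pow l m')) * cis (phase N j m - phase N j m')" for j
    unfolding coherent_amp_def by (simp add: cis_cnj cis_mult mult_ac)
  then have "(\<Sum>j\<in>phases N. coherent_amp N l j m * cnj (coherent_amp N l j m'))
      = complex_of_real (sqrt (rho_pow l m) * sqrt (rho_pow l m')) * (\<Sum>j\<in>phases N. cis (phase N j m - phase N j m'))"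
    by (simp add: sum_distrib_left)
  then show ?thesis
    using assms rho_pow_pos[of l m] rho_pow_pos[of l m'] by (simp add: sum_phases_cis flip: of_real_mult)
qed

section \<open>Averaging over radii\<close>

definition grid :: "nat \<Rightarrow> ('d::finite \<Rightarrow> nat) set" where
  "grid n = PiE UNIV (\<lambda>_. {..grid_max n})"

definition grid_weight :: "nat \<Rightarrow> ('d::finite \<Rightarrow> nat) \<Rightarrow> real" where
  "grid_weight n l = (\<Prod>i\<in>UNIV. real ((grid_max n - l i) choose n))"

lemma finite_grid: "finite (grid n)"
  unfolding grid_def by (simp add: finite_PiE)

lemma grid_weight_nonneg: "grid_weight n l \<ge> 0"
  unfolding grid_weight_def by (intro prod_nonneg) auto

lemma zero_in_grid: "(\<lambda>_. 0) \<in> grid n"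
  unfolding grid_def by (simp add: PiE_UNIV_domain)

lemma grid_weight_zero_pos: "grid_weight n (\<lambda>_. 0) > 0"
  unfolding grid_weight_def grid_max_def by (intro prod_pos) simp

lemma sum_grid_weight_rho_pow:
  "(\<Sum>l\<in>grid n. grid_weight n l * rho_pow l m) = (\<Prod>i\<in>UNIV. binom_moment (grid_max n) n (m i))"
proof -
  have "(\<Sum>l\<in>grid n. grid_weight n l * rho_pow l m) = (\<Sum>l\<in>PiE UNIV (\<lambda>_. {..grid_max n}).
      \<Prod>i\<in>UNIV. real ((grid_max n - l i) choose n) * real (Suc (l i)) ^ m i)"
    unfolding grid_def grid_weight_def rho_pow_def prod.distrib ..
  also have "\<dots> = (\<Prod>i\<in>UNIV. \<Sum>y\<le>grid_max n. real ((grid_max n - y) choose n) * real (Suc y) ^ m i)"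
    by (rule prod_sum_PiE[symmetric]) auto
  finally show ?thesis
    unfolding binom_moment_def .
qed

lemma prod_binom_moment_tendsto:
  "(\<lambda>n. (\<Prod>i\<in>UNIV. binom_moment (grid_max n) n (m i)) / (grid_mass n ^ CARD('d) * real n ^ excitations m))
     \<longlonglongrightarrow> mfact (m :: 'd::finite \<Rightarrow> nat)"
proof -
  have "(\<lambda>n. \<Prod>i\<in>UNIV. scaled_moment n (m i)) \<longlonglongrightarrow> mfact m"
    unfolding mfact_def by (intro tendsto_prod scaled_moment_tendsto)
  moreover have "\<forall>\<^sub>F n in sequentially. (\<Prod>i\<in>UNIV. scaled_moment n (m i))
      = (\<Prod>i\<in>UNIV. binom_moment (grid_max n) n (m i)) / (grid_mass n ^ CARD('d) * real n ^ excitations m)"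
    using eventually_ge_at_top[of 1]
    by eventually_elim (simp add: scaled_moment_def prod_dividef prod.distrib excitations_def power_sum)
  ultimately show ?thesis
    by (rule Lim_transform_eventually)
qed

section \<open>The approximating mixtures\<close>

definition level_amp :: "nat \<Rightarrow> nat \<Rightarrow> ('d::finite \<Rightarrow> nat) \<Rightarrow> ('d \<Rightarrow> nat) \<Rightarrow> ('d \<Rightarrow> nat) \<Rightarrow> complex" where
  "level_amp N L l j e =
     (if e \<in> level L then complex_of_real (sqrt (fact L / mfact e)) * coherent_amp N l j e else 0)"

definition level_amp_norm :: "nat \<Rightarrow> ('d::finite \<Rightarrow> nat) \<Rightarrow> real" where
  "level_amp_norm L l = (\<Sum>e\<in>level L. fact L / mfact e * rho_pow l e)"

definition level_norm :: "'d::finite itself \<Rightarrow> nat \<Rightarrow> nat \<Rightarrow> real" where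
  "level_norm _ n L = (\<Sum>l\<in>(grid n :: ('d \<Rightarrow> nat) set).
     grid_weight n l * (\<Sum>a\<in>UNIV. rho_pow l (unit_exc a)) * level_amp_norm L l)"

definition mix_weight :: "real \<Rightarrow> nat \<Rightarrow> nat \<Rightarrow> ('d::finite \<Rightarrow> nat) \<Rightarrow> real" where
  "mix_weight z n L l = level_prob TYPE('d) z L / (\<Sum>L'\<le>n. level_prob TYPE('d) z L')
     * grid_weight n l / (real (n + 2) ^ CARD('d) * level_norm TYPE('d) n L)"

definition approx_choi :: "real \<Rightarrow> nat \<Rightarrow> ('d::finite \<times> ('d \<Rightarrow> nat)) op" where
  "approx_choi z n = (\<lambda>(a, e) (a', e'). \<Sum>L\<le>n. \<Sum>l\<in>grid n. \<Sum>j\<in>phases (n + 2).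
     complex_of_real (mix_weight z n L l)
     * (coherent_amp (n + 2) l j (unit_exc a) * cnj (coherent_amp (n + 2) l j (unit_exc a')))
     * (level_amp (n + 2) L l j e * cnj (level_amp (n + 2) L l j e')))"

lemma level_amp_norm_pos: "level_amp_norm L (l :: 'd::finite \<Rightarrow> nat) > 0"
  unfolding level_amp_norm_def
  by (intro sum_pos finite_level level_nonempty mult_pos_pos divide_pos_pos mfact_pos rho_pow_pos) auto

lemma level_norm_pos: "level_norm TYPE('d::finite) n L > 0"
  unfolding level_norm_def
proof (rule sum_pos2[OF finite_grid zero_in_grid])
  show "0 < grid_weight n (\<lambda>_. 0) * (\<Sum>a\<in>UNIV. rho_pow (\<lambda>_::'d. 0) (unit_exc a)) * level_amp_norm L (\<lambda>_::'d. 0)"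
    by (intro mult_pos_pos grid_weight_zero_pos level_amp_norm_pos sum_pos rho_pow_pos) auto
  show "0 \<le> grid_weight n l * (\<Sum>a\<in>UNIV. rho_pow l (unit_exc a)) * level_amp_norm L l" for l :: "'d \<Rightarrow> nat"
    using grid_weight_nonneg[of n l] level_amp_norm_pos[of L l] rho_pow_pos[of l]
    by (intro mult_nonneg_nonneg sum_nonneg) (auto intro: less_imp_le)
qed

lemma level_prob_partial_sum_pos:
  assumes "0 \<le> z" "z < 1"
  shows "(\<Sum>L\<le>n. level_prob TYPE('d::finite) z L) > 0"
proof (rule sum_pos2[of _ 0])
  show "level_prob TYPE('d) z 0 > 0"
    unfolding level_prob_def using assms level_weight_pos[where 'd = 'd, of 0] by simp
qed (use assms level_prob_nonneg in auto)

lemma level_amp_has_sum: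
  "((\<lambda>e. (cmod (level_amp N L l j e))\<^sup>2) has_sum level_amp_norm L l) (UNIV :: ('d::finite \<Rightarrow> nat) set)"
proof -
  have "0 \<le> fact L / mfact e" for e :: "'d \<Rightarrow> nat"
    using mfact_pos[of e] by simp
  then have "((\<lambda>e. (cmod (level_amp N L l j e))\<^sup>2) has_sum level_amp_norm L l) (level L)"
    unfolding level_amp_norm_def using finite_level
    by (intro has_sum_finiteI)
      (auto simp: level_amp_def norm_mult power_mult_distrib cmod_coherent_amp_sq intro!: sum.cong)
  then show ?thesis
    by (rule has_sum_cong_neutral[THEN iffD1, rotated -1]) (auto simp: level_amp_def)
qed

lemma approx_choi_in_conv_product_states:
  assumes "0 \<le> z" "z < 1"
  shows "approx_choi z n \<in> (conv_product_states :: ('d::finite \<times> ('d \<Rightarrow> nat)) op set)"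
proof -
  define K where "K = {..n} \<times> (grid n :: ('d \<Rightarrow> nat) set) \<times> (phases (n + 2) :: ('d \<Rightarrow> nat) set)"
  define c where "c k = mix_weight z n (fst k) (fst (snd k))" for k :: "nat \<times> ('d \<Rightarrow> nat) \<times> ('d \<Rightarrow> nat)"
  define \<alpha> where "\<alpha> k a = coherent_amp (n + 2) (fst (snd k)) (snd (snd k)) (unit_exc a)"
    for k :: "nat \<times> ('d \<Rightarrow> nat) \<times> ('d \<Rightarrow> nat)" and a
  define \<beta> where "\<beta> k = level_amp (n + 2) (fst k) (fst (snd k)) (snd (snd k))"
    for k :: "nat \<times> ('d \<Rightarrow> nat) \<times> ('d \<Rightarrow> nat)"
  define A where "A l = (\<Sum>a\<in>UNIV. rho_pow l (unit_exc a))" for l :: "'d \<Rightarrow> nat"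
  have "(\<lambda>(a, e) (a', e'). \<Sum>k\<in>K. complex_of_real (c k) * (\<alpha> k a * cnj (\<alpha> k a')) * (\<beta> k e * cnj (\<beta> k e')))
      \<in> conv_product_states"
  proof (rule rank_one_mixture_in_conv_product_states[where A = "\<lambda>k. A (fst (snd k))"
        and B = "\<lambda>k. level_amp_norm (fst k) (fst (snd k))"])
    show "finite K"
      unfolding K_def using finite_grid finite_phases by blast
    show "0 \<le> c k" for k
      unfolding c_def mix_weight_def
      using assms level_prob_nonneg level_prob_partial_sum_pos grid_weight_nonneg level_norm_pos[where 'd = 'd]
      by (intro mult_nonneg_nonneg divide_nonneg_pos) auto
    show "((\<lambda>a. (cmod (\<alpha> k a))\<^sup>2) has_sum A (fst (snd k))) UNIV" for k
      unfolding A_def \<alpha>_def cmod_coherent_amp_sq by (rule has_sum_finiteI) auto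
    show "A (fst (snd k)) > 0" for k
      unfolding A_def by (intro sum_pos rho_pow_pos) auto
    show "((\<lambda>e. (cmod (\<beta> k e))\<^sup>2) has_sum level_amp_norm (fst k) (fst (snd k))) UNIV" for k
      unfolding \<beta>_def by (rule level_amp_has_sum)
    show "level_amp_norm (fst k) (fst (snd k)) > 0" for k
      by (rule level_amp_norm_pos)
    have level_sum: "(\<Sum>l\<in>grid n. \<Sum>j\<in>(phases (n + 2) :: ('d \<Rightarrow> nat) set). mix_weight z n L l * A l * level_amp_norm L l)
        = level_prob TYPE('d) z L / (\<Sum>L'\<le>n. level_prob TYPE('d) z L')" for L
    proof -
      have pos: "level_norm TYPE('d) n L > 0"
        by (rule level_norm_pos)
      have "(\<Sum>l\<in>grid n. \<Sum>j\<in>(phases (n + 2) :: ('d \<Rightarrow> nat) set). mix_weight z n L l * A l * level_amp_norm L l)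
          = level_prob TYPE('d) z L / (\<Sum>L'\<le>n. level_prob TYPE('d) z L')
            * ((\<Sum>l\<in>grid n. grid_weight n l * A l * level_amp_norm L l) / level_norm TYPE('d) n L)"
        unfolding sum_divide_distrib sum_distrib_left using pos
        by (intro sum.cong refl) (simp add: card_phases mix_weight_def)
      also have "(\<Sum>l\<in>grid n. grid_weight n l * A l * level_amp_norm L l) = level_norm TYPE('d) n L"
        by (simp add: level_norm_def A_def)
      finally show ?thesis
        using pos by simp
    qed
    have "(\<Sum>k\<in>K. c k * A (fst (snd k)) * level_amp_norm (fst k) (fst (snd k)))
        = (\<Sum>L\<le>n. \<Sum>l\<in>grid n. \<Sum>j\<in>(phases (n + 2) :: ('d \<Rightarrow> nat) set). mix_weight z n L l * A l * level_amp_norm L l)"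
      by (simp only: K_def c_def sum.cartesian_product case_prod_unfold fst_conv snd_conv)
    also have "\<dots> = (\<Sum>L\<le>n. level_prob TYPE('d) z L / (\<Sum>L'\<le>n. level_prob TYPE('d) z L'))"
      by (simp only: level_sum)
    also have "\<dots> = 1"
      using level_prob_partial_sum_pos[OF assms, where 'd = 'd, of n] by (simp add: sum_divide_distrib[symmetric])
    finally show "(\<Sum>k\<in>K. c k * A (fst (snd k)) * level_amp_norm (fst k) (fst (snd k))) = 1" .
  qed
  moreover have "(\<Sum>k\<in>K. complex_of_real (c k) * (\<alpha> k a * cnj (\<alpha> k a')) * (\<beta> k e * cnj (\<beta> k e')))
      = approx_choi z n (a, e) (a', e')" for a e a' e'
    by (simp add: approx_choi_def K_def c_def \<alpha>_def \<beta>_def sum.cartesian_product case_prod_unfold)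
  ultimately show ?thesis
    by (simp add: case_prod_unfold)
qed

lemma add_exc_less:
  assumes "excitations e \<le> n"
  shows "add_exc e a i < n + 2"
  using le_excitations[of "add_exc e a" i] assms by simp

lemma sum_phases_mixture_term:
  fixes e e' :: "'d::finite \<Rightarrow> nat"
  assumes "e \<in> level L" "e' \<in> level L" "N > 0" "\<And>i. add_exc e a i < N" "\<And>i. add_exc e' a' i < N"
  shows "(\<Sum>j\<in>phases N. (coherent_amp N l j (unit_exc a) * cnj (coherent_amp N l j (unit_exc a')))
      * (level_amp N L l j e * cnj (level_amp N L l j e')))
    = (if add_exc e a = add_exc e' a' then of_nat (N ^ CARD('d)) * complex_of_real
        (sqrt (fact L / mfact e) * sqrt (fact L / mfact e') * rho_pow l (add_exc e a)) else 0)"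
proof -
  have "coherent_amp N l j (add_exc e a) = coherent_amp N l j e * coherent_amp N l j (unit_exc a)" for e a j
    unfolding add_exc_def by (rule coherent_amp_add)
  then have "(coherent_amp N l j (unit_exc a) * cnj (coherent_amp N l j (unit_exc a')))
      * (level_amp N L l j e * cnj (level_amp N L l j e'))
      = complex_of_real (sqrt (fact L / mfact e) * sqrt (fact L / mfact e'))
        * (coherent_amp N l j (add_exc e a) * cnj (coherent_amp N l j (add_exc e' a')))" for j
    using assms(1,2) by (simp add: level_amp_def mult_ac)
  then show ?thesis
    using assms(3-5) by (simp add: sum_distrib_left[symmetric] sum_phases_coherent_amp)
qed

lemma approx_choi_entry:
  fixes e e' :: "'d::finite \<Rightarrow> nat"
  assumes "excitations e \<le> n" "excitations e' \<le> n"
  shows "approx_choi z n (a, e) (a', e') = complex_of_real (if add_exc e a = add_exc e' a' then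
      level_prob TYPE('d) z (excitations e) / (\<Sum>L\<le>n. level_prob TYPE('d) z L)
      * sqrt (fact (excitations e) / mfact e) * sqrt (fact (excitations e) / mfact e')
      * (\<Prod>i\<in>UNIV. binom_moment (grid_max n) n (add_exc e a i)) / level_norm TYPE('d) n (excitations e)
    else 0)"
proof -
  define F where "F L = level_prob TYPE('d) z L / (\<Sum>L\<le>n. level_prob TYPE('d) z L)
      * sqrt (fact L / mfact e) * sqrt (fact L / mfact e')
      * (\<Prod>i\<in>UNIV. binom_moment (grid_max n) n (add_exc e a i)) / level_norm TYPE('d) n L" for L
  have distrib: "(\<Sum>j\<in>S. c * X j * Y j) = c * (\<Sum>j\<in>S. X j * Y j)" for c :: complex and S :: "'b set" and X Y
    by (simp add: sum_distrib_left mult.assoc)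
  have level_term: "(\<Sum>l\<in>grid n. \<Sum>j\<in>phases (n + 2). complex_of_real (mix_weight z n L l)
      * (coherent_amp (n + 2) l j (unit_exc a) * cnj (coherent_amp (n + 2) l j (unit_exc a')))
      * (level_amp (n + 2) L l j e * cnj (level_amp (n + 2) L l j e')))
    = (if e \<in> level L \<and> e' \<in> level L \<and> add_exc e a = add_exc e' a' then complex_of_real (F L) else 0)" for L
  proof (cases "e \<in> level L \<and> e' \<in> level L")
    case True
    have phase_sum: "(\<Sum>j\<in>phases (n + 2).
        (coherent_amp (n + 2) l j (unit_exc a) * cnj (coherent_amp (n + 2) l j (unit_exc a')))
        * (level_amp (n + 2) L l j e * cnj (level_amp (n + 2) L l j e')))
      = (if add_exc e a = add_exc e' a' then of_nat ((n + 2) ^ CARD('d)) * complex_of_real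
          (sqrt (fact L / mfact e) * sqrt (fact L / mfact e') * rho_pow l (add_exc e a)) else 0)" for l
      using True add_exc_less[OF assms(1), of a] add_exc_less[OF assms(2), of a']
      by (intro sum_phases_mixture_term) auto
    have "(\<Sum>l\<in>grid n. \<Sum>j\<in>phases (n + 2). complex_of_real (mix_weight z n L l)
        * (coherent_amp (n + 2) l j (unit_exc a) * cnj (coherent_amp (n + 2) l j (unit_exc a')))
        * (level_amp (n + 2) L l j e * cnj (level_amp (n + 2) L l j e')))
      = (\<Sum>l\<in>grid n. complex_of_real (mix_weight z n L l) * (if add_exc e a = add_exc e' a'
          then of_nat ((n + 2) ^ CARD('d)) * complex_of_real
            (sqrt (fact L / mfact e) * sqrt (fact L / mfact e') * rho_pow l (add_exc e a)) else 0))"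
      unfolding distrib phase_sum ..
    also have "\<dots> = (if add_exc e a = add_exc e' a' then complex_of_real (\<Sum>l\<in>grid n. mix_weight z n L l
        * (real ((n + 2) ^ CARD('d)) * (sqrt (fact L / mfact e) * sqrt (fact L / mfact e') * rho_pow l (add_exc e a))))
        else 0)"
      by simp
    also have "(\<Sum>l\<in>grid n. mix_weight z n L l
        * (real ((n + 2) ^ CARD('d)) * (sqrt (fact L / mfact e) * sqrt (fact L / mfact e') * rho_pow l (add_exc e a))))
        = F L"
    proof -
      have "(\<Sum>l\<in>grid n. mix_weight z n L l
          * (real ((n + 2) ^ CARD('d)) * (sqrt (fact L / mfact e) * sqrt (fact L / mfact e') * rho_pow l (add_exc e a))))
        = level_prob TYPE('d) z L / (\<Sum>L\<le>n. level_prob TYPE('d) z L)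
          * sqrt (fact L / mfact e) * sqrt (fact L / mfact e')
          * (\<Sum>l\<in>grid n. grid_weight n l * rho_pow l (add_exc e a)) / level_norm TYPE('d) n L"
      proof -
        have rearrange: "p / q * w / (N * v) * (N * (s1 * s2 * r)) = p / q * s1 * s2 * (w * r) / v"
          if "N \<noteq> 0" "v \<noteq> 0" for p q w N v s1 s2 r :: real
          using that by (cases "q = 0") (simp_all add: field_simps)
        show ?thesis
          unfolding sum_distrib_left sum_divide_distrib mix_weight_def of_nat_power
          using level_norm_pos[where 'd = 'd, of n L] by (intro sum.cong[OF refl] rearrange) auto
      qed
      then show ?thesis
        by (simp add: F_def sum_grid_weight_rho_pow)
    qed
    finally show ?thesis
      using True by simp
  qed (auto simp: level_amp_def)
  have "approx_choi z n (a, e) (a', e')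
      = (\<Sum>L\<le>n. if e \<in> level L \<and> e' \<in> level L \<and> add_exc e a = add_exc e' a' then complex_of_real (F L) else 0)"
    unfolding approx_choi_def prod.case level_term ..
  also have "\<dots> = (if add_exc e a = add_exc e' a' then complex_of_real (F (excitations e)) else 0)"
  proof (cases "add_exc e a = add_exc e' a'")
    case True
    then have "excitations e' = excitations e"
      by (metis excitations_eq_if_add_exc_eq)
    then show ?thesis
      using True assms(1) by (simp add: level_def conj_commute eq_commute[of "excitations e"])
  qed simp
  finally show ?thesis
    by (simp add: F_def)
qed

lemma level_norm_eq:
  "level_norm TYPE('d::finite) n L = (\<Sum>a\<in>UNIV. \<Sum>e\<in>(level L :: ('d \<Rightarrow> nat) set).
     fact L / mfact e * (\<Prod>i\<in>UNIV. binom_moment (grid_max n) n (add_exc e a i)))"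
proof -
  have "grid_weight n l * (\<Sum>a\<in>UNIV. rho_pow l (unit_exc a)) * level_amp_norm L l
      = (\<Sum>a\<in>UNIV. \<Sum>e\<in>level L. fact L / mfact e * (grid_weight n l * rho_pow l (add_exc e a)))"
    for l :: "'d \<Rightarrow> nat"
    unfolding level_amp_norm_def mult.assoc[of "grid_weight n l"] sum_product
    unfolding sum_distrib_left add_exc_def rho_pow_add by (simp add: mult_ac)
  then have "level_norm TYPE('d) n L = (\<Sum>l\<in>grid n. \<Sum>a\<in>UNIV. \<Sum>e\<in>(level L :: ('d \<Rightarrow> nat) set).
      fact L / mfact e * (grid_weight n l * rho_pow l (add_exc e a)))"
    unfolding level_norm_def by simp
  also have "\<dots> = (\<Sum>a\<in>UNIV. \<Sum>e\<in>(level L :: ('d \<Rightarrow> nat) set).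
      fact L / mfact e * (\<Sum>l\<in>grid n. grid_weight n l * rho_pow l (add_exc e a)))"
    unfolding sum_distrib_left by (subst sum.swap) (subst (2) sum.swap, rule refl)
  finally have "level_norm TYPE('d) n L = (\<Sum>a\<in>UNIV. \<Sum>e\<in>(level L :: ('d \<Rightarrow> nat) set).
      fact L / mfact e * (\<Sum>l\<in>grid n. grid_weight n l * rho_pow l (add_exc e a)))" .
  then show ?thesis
    by (simp add: sum_grid_weight_rho_pow)
qed

lemma level_norm_tendsto:
  "(\<lambda>n. level_norm TYPE('d::finite) n L / (grid_mass n ^ CARD('d) * real n ^ Suc L))
     \<longlonglongrightarrow> fact L * level_weight TYPE('d) L"
proof -
  have "(\<lambda>n. \<Sum>a\<in>UNIV. \<Sum>e\<in>(level L :: ('d \<Rightarrow> nat) set). fact L / mfact e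
      * ((\<Prod>i\<in>UNIV. binom_moment (grid_max n) n (add_exc e a i))
        / (grid_mass n ^ CARD('d) * real n ^ excitations (add_exc e a))))
    \<longlonglongrightarrow> (\<Sum>a\<in>UNIV. \<Sum>e\<in>(level L :: ('d \<Rightarrow> nat) set). fact L / mfact e * mfact (add_exc e a))"
    by (intro tendsto_sum tendsto_mult tendsto_const prod_binom_moment_tendsto)
  moreover have "(\<Sum>a\<in>UNIV. \<Sum>e\<in>(level L :: ('d \<Rightarrow> nat) set). fact L / mfact e
      * ((\<Prod>i\<in>UNIV. binom_moment (grid_max n) n (add_exc e a i))
        / (grid_mass n ^ CARD('d) * real n ^ excitations (add_exc e a))))
    = level_norm TYPE('d) n L / (grid_mass n ^ CARD('d) * real n ^ Suc L)" for n
    unfolding level_norm_eq sum_divide_distrib by (intro sum.cong refl) (simp add: level_def)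
  moreover have "(\<Sum>a\<in>UNIV. \<Sum>e\<in>(level L :: ('d \<Rightarrow> nat) set). fact L / mfact e * mfact (add_exc e a))
      = fact L * level_weight TYPE('d) L"
  proof -
    have "fact L / mfact e * mfact (add_exc e a) = fact L * real (Suc (e a))" for e :: "'d \<Rightarrow> nat" and a
      using mfact_pos[of e] by (simp add: mfact_add_exc)
    then show ?thesis
      unfolding level_weight_def sum_distrib_left by (subst sum.swap) simp
  qed
  ultimately show ?thesis
    by simp
qed

lemma sqrt_div_mult_sqrt_div:
  fixes F M A B :: real
  assumes "F > 0" "M \<ge> 0"
  shows "sqrt (F / A) * sqrt (F / B) * M / F = sqrt (M / A) * sqrt (M / B)"
proof -
  have "sqrt (X / A) * sqrt (X / B) = X * sqrt (1 / (A * B))" if "X \<ge> 0" for X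
  proof -
    have "sqrt (X / A) * sqrt (X / B) = sqrt (X\<^sup>2 * (1 / (A * B)))"
      by (simp add: real_sqrt_mult[symmetric] power2_eq_square)
    also have "\<dots> = sqrt (X\<^sup>2) * sqrt (1 / (A * B))"
      by (rule real_sqrt_mult)
    also have "\<dots> = X * sqrt (1 / (A * B))"
      using that by simp
    finally show ?thesis .
  qed
  then show ?thesis
    using assms by simp
qed

lemma approx_choi_tendsto:
  fixes e e' :: "'d::finite \<Rightarrow> nat"
  assumes "0 \<le> z" "z < 1"
  shows "(\<lambda>n. approx_choi z n (a, e) (a', e')) \<longlonglongrightarrow> complex_of_real (unruh_choi z a e a' e')"
proof (cases "add_exc e a = add_exc e' a'")
  case False
  have "\<forall>\<^sub>F n in sequentially. approx_choi z n (a, e) (a', e') = 0"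
    using eventually_ge_at_top[of "max (excitations e) (excitations e')"]
    by eventually_elim (simp add: approx_choi_entry False)
  then show ?thesis
    using False by (simp add: unruh_choi_def tendsto_eventually)
next
  case True
  define L where "L = excitations e"
  define m where "m = add_exc e a"
  define D where "D n = grid_mass n ^ CARD('d) * real n ^ Suc L" for n
  define s where "s = sqrt (fact L / mfact e) * sqrt (fact L / mfact e')"
  define h where "h n = level_prob TYPE('d) z L / (\<Sum>L\<le>n. level_prob TYPE('d) z L) * s
      * ((\<Prod>i\<in>UNIV. binom_moment (grid_max n) n (m i)) / D n) / (level_norm TYPE('d) n L / D n)" for n
  have "(\<lambda>n. \<Sum>L\<le>n. level_prob TYPE('d) z L) \<longlonglongrightarrow> 1"
    using LIMSEQ_Suc[OF level_prob_sums[OF assms, unfolded sums_def]] by (simp add: lessThan_Suc_atMost)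
  then have "h \<longlonglongrightarrow> level_prob TYPE('d) z L / 1 * s * mfact m / (fact L * level_weight TYPE('d) L)"
    unfolding h_def
    using prod_binom_moment_tendsto[of m] level_norm_tendsto[where 'd = 'd, of L] level_weight_pos[where 'd = 'd, of L]
    by (intro tendsto_intros) (simp_all add: D_def m_def L_def)
  also have "level_prob TYPE('d) z L / 1 * s * mfact m / (fact L * level_weight TYPE('d) L)
      = 1 / real CARD('d) * (1 - z) ^ (CARD('d) + 1) * z ^ L * (s * mfact m / fact L)"
  proof -
    have cancel: "c * w / 1 * x * y / (u * w) = c * (x * y / u)" if "w \<noteq> 0" for c w x y u :: real
      using that by (simp add: field_simps)
    show ?thesis
      unfolding level_prob_def by (rule cancel) (use level_weight_pos[where 'd = 'd, of L] in simp)
  qed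
  also have "s * mfact m / fact L = sqrt (1 + real (e a)) * sqrt (1 + real (e' a'))"
  proof -
    have "mfact m / mfact e = 1 + real (e a)"
      using mfact_add_exc[of e a] mfact_pos[of e] by (simp add: m_def)
    moreover have "mfact m / mfact e' = 1 + real (e' a')"
      using mfact_add_exc[of e' a'] mfact_pos[of e'] True by (simp add: m_def)
    ultimately show ?thesis
      unfolding s_def using sqrt_div_mult_sqrt_div[of "fact L" "mfact m" "mfact e" "mfact e'"] mfact_pos[of m]
      by simp
  qed
  also have "1 / real CARD('d) * (1 - z) ^ (CARD('d) + 1) * z ^ L * (sqrt (1 + real (e a)) * sqrt (1 + real (e' a')))
      = unruh_choi z a e a' e'"
    using True by (simp add: unruh_choi_def L_def)
  finally have "(\<lambda>n. complex_of_real (h n)) \<longlonglongrightarrow> complex_of_real (unruh_choi z a e a' e')"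
    by (rule tendsto_of_real)
  moreover have "\<forall>\<^sub>F n in sequentially. complex_of_real (h n) = approx_choi z n (a, e) (a', e')"
    using eventually_ge_at_top[of "max 1 (max (excitations e) (excitations e'))"]
  proof eventually_elim
    case (elim n)
    then have "D n \<noteq> 0"
      using grid_mass_pos[of n] by (simp add: D_def)
    then show ?case
      using elim True by (simp add: h_def approx_choi_entry L_def m_def s_def)
  qed
  ultimately show ?thesis
    by (rule Lim_transform_eventually)
qed

theorem theorem2:
  fixes z r :: real
  assumes "CARD('d::finite) \<ge> 2"
    and "0 \<le> z" and "z < 1"
    and "z = (tanh r)\<^sup>2"
  shows "hadamard_channel (unruh_iso r :: 'd \<Rightarrow> ('d \<Rightarrow> nat) \<Rightarrow> ('d \<Rightarrow> nat) \<Rightarrow> complex)"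
  unfolding hadamard_channel_def entanglement_breaking_def separable_def
proof (intro exI[of _ "approx_choi z"] conjI allI)
  show "approx_choi z n \<in> conv_product_states" for n
    using assms(2,3) by (rule approx_choi_in_conv_product_states)
  show "(\<lambda>n. approx_choi z n x y) \<longlonglongrightarrow> choi (compl_channel (unruh_iso r)) x y" for x y :: "'d \<times> ('d \<Rightarrow> nat)"
    using approx_choi_tendsto[OF assms(2,3)]
    by (cases x; cases y) (simp add: choi_compl_unruh_iso assms(4)[symmetric])
qed

end
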